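(* Let $v$ be a vertex of degree at least $4$ in a graph $G$, and let $va, vb$ be two distinct edges incident with $v$ where $a\ne b$. Let $G_{[v,ab]}=G-v+ab$ be the graph obtained by deleting $v$ and adding a new edge $ab$. If $G_{[v,ab]}\in\mathcal{S}_3$, then $G\in\mathcal{S}_3$.
   Context: Graphs may have parallel edges but no loops. $G\in\mathcal{S}_3$ means: for every $\beta:V(G)\to\mathbb{Z}_3$ with $\sum_v\beta(v)\equiv0\pmod3$ there is a strongly-connected orientation $D$ of $G$ with $d^+_D(v)-d^-_D(v)\equiv\beta(v)\pmod3$ for all $v$. *)

theory Defs
  imports Main
begin

definition multigraph :: "'v set \<Rightarrow> 'e set \<Rightarrow> ('e \<Rightarrow> 'v \<times> 'v) \<Rightarrow> bool" where
  "multigraph V E ends \<longleftrightarrow> finite V \<and> finite E \<and>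
     (\<forall>e\<in>E. fst (ends e) \<in> V \<and> snd (ends e) \<in> V \<and> fst (ends e) \<noteq> snd (ends e))"

definition incident :: "('e \<Rightarrow> 'v \<times> 'v) \<Rightarrow> 'e \<Rightarrow> 'v \<Rightarrow> bool" where
  "incident ends e x \<longleftrightarrow> fst (ends e) = x \<or> snd (ends e) = x"

definition degree :: "'e set \<Rightarrow> ('e \<Rightarrow> 'v \<times> 'v) \<Rightarrow> 'v \<Rightarrow> nat" where
  "degree E ends x = card {e\<in>E. incident ends e x}"

definition is_orientation :: "'e set \<Rightarrow> ('e \<Rightarrow> 'v \<times> 'v) \<Rightarrow> ('e \<Rightarrow> 'v \<times> 'v) \<Rightarrow> bool" where
  "is_orientation E ends D \<longleftrightarrow> (\<forall>e\<in>E. D e = ends e \<or> D e = prod.swap (ends e))"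

definition strongly_connected :: "'v set \<Rightarrow> 'e set \<Rightarrow> ('e \<Rightarrow> 'v \<times> 'v) \<Rightarrow> bool" where
  "strongly_connected V E D \<longleftrightarrow> (\<forall>x\<in>V. \<forall>y\<in>V. (x, y) \<in> (D ` E)\<^sup>*)"

definition outdeg :: "'e set \<Rightarrow> ('e \<Rightarrow> 'v \<times> 'v) \<Rightarrow> 'v \<Rightarrow> nat" where
  "outdeg E D x = card {e\<in>E. fst (D e) = x}"

definition indeg :: "'e set \<Rightarrow> ('e \<Rightarrow> 'v \<times> 'v) \<Rightarrow> 'v \<Rightarrow> nat" where
  "indeg E D x = card {e\<in>E. snd (D e) = x}"

text \<open>G \<in> S_3: for every beta : V \<rightarrow> Z_3 (represented by integers mod 3) with zero sum,
  there is a strongly connected orientation D with outdeg - indeg \<equiv> beta (mod 3).\<close>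
definition S3 :: "'v set \<Rightarrow> 'e set \<Rightarrow> ('e \<Rightarrow> 'v \<times> 'v) \<Rightarrow> bool" where
  "S3 V E ends \<longleftrightarrow>
     (\<forall>\<beta> :: 'v \<Rightarrow> int. (\<Sum>x\<in>V. \<beta> x) mod 3 = 0 \<longrightarrow>
        (\<exists>D. is_orientation E ends D \<and> strongly_connected V E D \<and>
             (\<forall>x\<in>V. (int (outdeg E D x) - int (indeg E D x)) mod 3 = \<beta> x mod 3)))"

text \<open>G_[v,ab] = G - v + ab: delete v (and its incident edges), add a new edge ab
  (labelled None; old edges e become Some e).\<close>
definition lift_V :: "'v set \<Rightarrow> 'v \<Rightarrow> 'v set" where
  "lift_V V v = V - {v}"

definition lift_E :: "'e set \<Rightarrow> ('e \<Rightarrow> 'v \<times> 'v) \<Rightarrow> 'v \<Rightarrow> 'e option set" where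
  "lift_E E ends v = insert None (Some ` {e\<in>E. \<not> incident ends e v})"

definition lift_ends :: "('e \<Rightarrow> 'v \<times> 'v) \<Rightarrow> 'v \<Rightarrow> 'v \<Rightarrow> 'e option \<Rightarrow> 'v \<times> 'v" where
  "lift_ends ends a b eo = (case eo of None \<Rightarrow> (a, b) | Some e \<Rightarrow> ends e)"

end

theory Submission
  imports Defs
begin

text \<open>Given a zero-sum boundary \<beta>, first orient the edges at v other than e1, e2: there are
  at least two of them, and reversing none, one or two of them shifts the net outdegree of v by
  0, 2 or 4, so it can be made congruent to \<beta> v modulo 3. Subtracting their contribution
  from \<beta> leaves a zero-sum boundary on G - v. A strongly connected orientation of the lifted
  graph realizing it is pulled back to G by routing the arc of the new edge ab through v along
  e1 and e2: this changes no net outdegree, and v gets an in-arc and an out-arc from the rest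
  of the graph, so strong connectivity survives.\<close>

abbreviation net_outdeg :: "'e set \<Rightarrow> ('e \<Rightarrow> 'v \<times> 'v) \<Rightarrow> 'v \<Rightarrow> int" where
  "net_outdeg E D x \<equiv> int (outdeg E D x) - int (indeg E D x)"

definition arc_excess :: "'v \<times> 'v \<Rightarrow> 'v \<Rightarrow> int" where
  "arc_excess p x = of_bool (fst p = x) - of_bool (snd p = x)"

lemma net_outdeg_eq_sum:
  assumes "finite E"
  shows "net_outdeg E D x = (\<Sum>e\<in>E. arc_excess (D e) x)"
proof -
  have "\<And>P. int (card {e\<in>E. P e}) = (\<Sum>e\<in>E. of_bool (P e))"
    using assms by (simp add: Collect_conj_eq Int_commute)
  then show ?thesis
    by (simp add: outdeg_def indeg_def arc_excess_def sum_subtractf)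
qed

lemma arc_excess_path2: "arc_excess (a, v) x + arc_excess (v, b) x = arc_excess (a, b) x"
  by (simp add: arc_excess_def)

lemma sum_arc_excess_eq_0:
  assumes "multigraph V E ends" "F \<subseteq> E" "is_orientation F ends D"
  shows "(\<Sum>x\<in>V. \<Sum>e\<in>F. arc_excess (D e) x) = 0"
proof -
  have fin: "finite V" "finite F"
    using assms(1,2) finite_subset by (auto simp: multigraph_def)
  have "(\<Sum>x\<in>V. arc_excess (D e) x) = 0" if "e \<in> F" for e
  proof -
    have "D e = ends e \<or> D e = prod.swap (ends e)" "fst (ends e) \<in> V" "snd (ends e) \<in> V"
      using assms that by (auto simp: multigraph_def is_orientation_def)
    then have "fst (D e) \<in> V" "snd (D e) \<in> V"
      by auto
    then show ?thesis
      using fin by (simp add: arc_excess_def sum_subtractf)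
  qed
  then show ?thesis
    by (subst sum.swap) simp
qed

lemma sum_remove_mod:
  fixes \<beta> c :: "'a \<Rightarrow> int"
  assumes "finite V" "v \<in> V" "(\<Sum>x\<in>V. c x) = 0" "(\<Sum>x\<in>V. \<beta> x) mod m = 0"
    and "c v mod m = \<beta> v mod m"
  shows "(\<Sum>x\<in>V - {v}. \<beta> x - c x) mod m = 0"
proof -
  have "(\<Sum>x\<in>V - {v}. \<beta> x - c x) = (\<Sum>x\<in>V. \<beta> x) + (c v - \<beta> v)"
    using assms(1-3) by (simp add: sum_subtractf sum_diff1)
  then show ?thesis
    using assms(4,5) by (simp add: mod_add_eq[symmetric] mod_diff_eq[symmetric])
qed

lemma reachable_insert_vertex:
  assumes "\<forall>x\<in>W. \<forall>y\<in>W. (x, y) \<in> r\<^sup>*"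
    and "u \<in> W" "w \<in> W" "(v, u) \<in> r" "(w, v) \<in> r"
  shows "\<forall>x\<in>insert v W. \<forall>y\<in>insert v W. (x, y) \<in> r\<^sup>*"
proof -
  have to_v: "(x, v) \<in> r\<^sup>*" if "x \<in> insert v W" for x
    using that assms by (auto intro: rtrancl_into_rtrancl)
  have from_v: "(v, y) \<in> r\<^sup>*" if "y \<in> insert v W" for y
    using that assms by (auto intro: converse_rtrancl_into_rtrancl)
  show ?thesis
    using to_v from_v by (blast intro: rtrancl_trans)
qed

lemma mod_3_diff_double_solvable:
  fixes k t :: int
  obtains r where "0 \<le> r" "r \<le> 2" "(k - 2 * r) mod 3 = t mod 3"
proof
  define r where "r = (2 * (k - t)) mod 3"
  show "0 \<le> r" "r \<le> 2"
    by (simp_all add: r_def)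
  have "(k - 2 * r) mod 3 = (k - 2 * (2 * (k - t))) mod 3"
    unfolding r_def by (metis mod_diff_right_eq mod_mult_right_eq)
  also have "k - 2 * (2 * (k - t)) = t + 3 * (t - k)"
    by simp
  finally show "(k - 2 * r) mod 3 = t mod 3"
    by (simp only: mod_mult_self2)
qed

lemma star_orientation_excess_mod_3:
  assumes "finite F" "card F \<ge> 2"
    and star: "\<And>e. e \<in> F \<Longrightarrow> incident ends e v \<and> fst (ends e) \<noteq> snd (ends e)"
  shows "\<exists>D. is_orientation F ends D \<and> (\<Sum>e\<in>F. arc_excess (D e) v) mod 3 = t mod 3"
proof -
  obtain r where r: "0 \<le> r" "r \<le> 2" "(int (card F) - 2 * r) mod 3 = t mod 3"
    by (rule mod_3_diff_double_solvable)
  define j where "j = nat r"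
  have j: "j \<le> card F" "(int (card F) - 2 * int j) mod 3 = t mod 3"
    using r assms(2) by (simp_all add: j_def)
  obtain J where J: "J \<subseteq> F" "card J = j"
    using obtain_subset_with_card_n[OF j(1)] by blast
  \<comment> \<open>the edges in J point into v, all others out of v\<close>
  define D where "D e = (if (fst (ends e) = v) \<noteq> (e \<in> J) then ends e else prod.swap (ends e))" for e
  have "arc_excess (D e) v = 1 - 2 * of_bool (e \<in> J)" if "e \<in> F" for e
    using star[OF that] by (cases "ends e") (auto simp: D_def arc_excess_def incident_def)
  then have "(\<Sum>e\<in>F. arc_excess (D e) v) = int (card F) - 2 * int (card J)"
    using assms(1) J(1) by (simp add: sum_subtractf sum_distrib_left[symmetric] Int_absorb1)
  moreover have "is_orientation F ends D"
    by (simp add: is_orientation_def D_def)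
  ultimately show ?thesis
    using J(2) j(2) by auto
qed

locale vertex_lifting =
  fixes V :: "'v set" and E :: "'e set" and ends :: "'e \<Rightarrow> 'v \<times> 'v"
    and v a b :: 'v and e1 e2 :: 'e
  assumes multigraph: "multigraph V E ends"
    and v_in: "v \<in> V"
    and e1_in: "e1 \<in> E" and e2_in: "e2 \<in> E" and e1_ne_e2: "e1 \<noteq> e2"
    and ends_e1: "ends e1 = (v, a) \<or> ends e1 = (a, v)"
    and ends_e2: "ends e2 = (v, b) \<or> ends e2 = (b, v)"
    and a_ne_b: "a \<noteq> b"
begin

lemma finite_V: "finite V" and finite_E: "finite E"
  using multigraph by (auto simp: multigraph_def)

lemma edge_ends: "e \<in> E \<Longrightarrow> fst (ends e) \<in> V \<and> snd (ends e) \<in> V \<and> fst (ends e) \<noteq> snd (ends e)"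
  using multigraph by (auto simp: multigraph_def)

lemma a_in: "a \<in> V - {v}" and b_in: "b \<in> V - {v}"
  using edge_ends[OF e1_in] edge_ends[OF e2_in] ends_e1 ends_e2 by auto

lemma incident_e1: "incident ends e1 v" and incident_e2: "incident ends e2 v"
  using ends_e1 ends_e2 by (auto simp: incident_def)

definition other_edges :: "'e set" where
  "other_edges = {e\<in>E. incident ends e v} - {e1, e2}"

lemma other_edges_subset: "other_edges \<subseteq> E"
  by (auto simp: other_edges_def)

lemma finite_other_edges: "finite other_edges"
  using finite_E other_edges_subset by (rule finite_subset[rotated])

lemma other_edges_star: "e \<in> other_edges \<Longrightarrow> incident ends e v \<and> fst (ends e) \<noteq> snd (ends e)"
  using edge_ends by (auto simp: other_edges_def)

lemma card_other_edges: "card other_edges + 2 = degree E ends v"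
proof -
  have "{e\<in>E. incident ends e v} = insert e1 (insert e2 other_edges)"
    using e1_in e2_in incident_e1 incident_e2 by (auto simp: other_edges_def)
  moreover have "e1 \<notin> other_edges" "e2 \<notin> other_edges"
    by (auto simp: other_edges_def)
  ultimately show ?thesis
    using finite_other_edges e1_ne_e2 by (simp add: degree_def)
qed

lemma lifted_arc:
  assumes "is_orientation (lift_E E ends v) (lift_ends ends a b) D'"
  shows "D' None = (a, b) \<or> D' None = (b, a)"
  using assms by (auto simp: is_orientation_def lift_E_def lift_ends_def)

definition unlift :: "('e option \<Rightarrow> 'v \<times> 'v) \<Rightarrow> ('e \<Rightarrow> 'v \<times> 'v) \<Rightarrow> 'e \<Rightarrow> 'v \<times> 'v" where
  "unlift D' D e =
    (if \<not> incident ends e v then D' (Some e)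
     else if e = e1 then (if fst (D' None) = a then (a, v) else (v, a))
     else if e = e2 then (if fst (D' None) = a then (v, b) else (b, v))
     else D e)"

lemma unlift_outside: "\<not> incident ends e v \<Longrightarrow> unlift D' D e = D' (Some e)"
  by (simp add: unlift_def)

lemma unlift_other: "e \<in> other_edges \<Longrightarrow> unlift D' D e = D e"
  by (simp add: unlift_def other_edges_def)

lemma unlift_e1_e2:
  assumes "is_orientation (lift_E E ends v) (lift_ends ends a b) D'"
  defines "p \<equiv> D' None"
  shows "unlift D' D e1 = (fst p, v) \<and> unlift D' D e2 = (v, snd p) \<or>
         unlift D' D e1 = (v, snd p) \<and> unlift D' D e2 = (fst p, v)"
  using lifted_arc[OF assms(1)]
proof
  assume "D' None = (a, b)"
  then show ?thesis
    using incident_e1 incident_e2 e1_ne_e2 by (simp add: unlift_def p_def)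
next
  assume "D' None = (b, a)"
  then show ?thesis
    using incident_e1 incident_e2 e1_ne_e2 a_ne_b by (simp add: unlift_def p_def)
qed

lemma is_orientation_unlift:
  assumes "is_orientation (lift_E E ends v) (lift_ends ends a b) D'"
    and "is_orientation other_edges ends D"
  shows "is_orientation E ends (unlift D' D)"
  unfolding is_orientation_def
proof
  fix e assume e: "e \<in> E"
  consider "\<not> incident ends e v" | "e = e1" | "e = e2" | "e \<in> other_edges"
    using e by (auto simp: other_edges_def)
  then show "unlift D' D e = ends e \<or> unlift D' D e = prod.swap (ends e)"
  proof cases
    case 1
    then show ?thesis
      using assms(1) e by (auto simp: is_orientation_def lift_E_def lift_ends_def unlift_outside)
  next
    case 2
    then show ?thesis
      using ends_e1 incident_e1 by (auto simp: unlift_def)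
  next
    case 3
    then show ?thesis
      using ends_e2 incident_e2 e1_ne_e2 by (auto simp: unlift_def)
  next
    case 4
    then show ?thesis
      using assms(2) by (simp add: is_orientation_def unlift_other)
  qed
qed

lemma strongly_connected_unlift:
  assumes D': "is_orientation (lift_E E ends v) (lift_ends ends a b) D'"
    and sc: "strongly_connected (lift_V V v) (lift_E E ends v) D'"
  shows "strongly_connected V E (unlift D' D)"
proof -
  let ?r = "unlift D' D ` E"
  define p where "p = D' None"
  have via_v: "(fst p, v) \<in> ?r" "(v, snd p) \<in> ?r"
    using imageI[OF e1_in, of "unlift D' D"] imageI[OF e2_in, of "unlift D' D"]
      unlift_e1_e2[OF D', of D]
    unfolding p_def by auto
  have "D' ` lift_E E ends v \<subseteq> ?r\<^sup>*"
  proof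
    fix q assume "q \<in> D' ` lift_E E ends v"
    then consider "q = p" | e where "e \<in> E" "\<not> incident ends e v" "q = D' (Some e)"
      by (auto simp: lift_E_def p_def)
    then show "q \<in> ?r\<^sup>*"
    proof cases
      case 1
      have "(fst p, snd p) \<in> ?r\<^sup>*"
        using via_v by (blast intro: rtrancl_into_rtrancl)
      then show ?thesis
        using 1 by simp
    next
      case 2
      then have "q = unlift D' D e"
        by (simp add: unlift_outside)
      then show ?thesis
        using 2(1) by blast
    qed
  qed
  then have "(D' ` lift_E E ends v)\<^sup>* \<subseteq> ?r\<^sup>*"
    by (rule rtrancl_subset_rtrancl)
  then have "\<forall>x\<in>V - {v}. \<forall>y\<in>V - {v}. (x, y) \<in> ?r\<^sup>*"
    using sc unfolding strongly_connected_def lift_V_def by blast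
  moreover have "fst p \<in> V - {v}" "snd p \<in> V - {v}"
    using lifted_arc[OF D'] a_in b_in by (auto simp: p_def)
  ultimately have "\<forall>x\<in>insert v (V - {v}). \<forall>y\<in>insert v (V - {v}). (x, y) \<in> ?r\<^sup>*"
    using via_v by (intro reachable_insert_vertex)
  then show ?thesis
    using v_in by (simp add: strongly_connected_def insert_absorb)
qed

lemma net_outdeg_unlift:
  assumes D': "is_orientation (lift_E E ends v) (lift_ends ends a b) D'"
  shows "net_outdeg E (unlift D' D) x =
         net_outdeg (lift_E E ends v) D' x + (\<Sum>e\<in>other_edges. arc_excess (D e) x)"
proof -
  define N where "N = {e\<in>E. \<not> incident ends e v}"
  have fin: "finite N" "finite other_edges"
    using finite_E finite_other_edges by (auto simp: N_def)
  have E_split: "E = N \<union> insert e1 (insert e2 other_edges)"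
    and disj: "N \<inter> insert e1 (insert e2 other_edges) = {}"
    and e12: "e1 \<notin> other_edges" "e2 \<notin> other_edges"
    using e1_in e2_in incident_e1 incident_e2 by (auto simp: N_def other_edges_def)
  have lift_split: "lift_E E ends v = insert None (Some ` N)"
    by (simp add: lift_E_def N_def)
  have path: "arc_excess (unlift D' D e1) x + arc_excess (unlift D' D e2) x = arc_excess (D' None) x"
    using unlift_e1_e2[OF D', of D] arc_excess_path2[where a = "fst (D' None)" and b = "snd (D' None)"]
    by (auto simp: add.commute)
  have outside: "(\<Sum>e\<in>N. arc_excess (unlift D' D e) x) = (\<Sum>e\<in>N. arc_excess (D' (Some e)) x)"
    by (rule sum.cong) (auto simp: N_def unlift_outside)
  have "net_outdeg E (unlift D' D) x =
      (\<Sum>e\<in>N \<union> insert e1 (insert e2 other_edges). arc_excess (unlift D' D e) x)"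
    unfolding net_outdeg_eq_sum[OF finite_E] by (rule arg_cong[OF E_split])
  also have "\<dots> = (\<Sum>e\<in>N. arc_excess (D' (Some e)) x)
      + (arc_excess (unlift D' D e1) x + arc_excess (unlift D' D e2) x)
      + (\<Sum>e\<in>other_edges. arc_excess (D e) x)"
    using fin disj e12 e1_ne_e2 by (simp add: sum.union_disjoint outside unlift_other add.assoc)
  also have "\<dots> = net_outdeg (lift_E E ends v) D' x + (\<Sum>e\<in>other_edges. arc_excess (D e) x)"
    using fin by (simp add: path lift_split net_outdeg_eq_sum sum.reindex)
  finally show ?thesis .
qed

lemma net_outdeg_lift_at_v:
  assumes D': "is_orientation (lift_E E ends v) (lift_ends ends a b) D'"
  shows "net_outdeg (lift_E E ends v) D' v = 0"
proof -
  have fin: "finite (lift_E E ends v)"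
    using finite_E by (simp add: lift_E_def)
  have zero: "arc_excess (D' e) v = 0" if "e \<in> lift_E E ends v" for e
  proof (cases e)
    case None
    then show ?thesis
      using lifted_arc[OF D'] a_in b_in by (auto simp: arc_excess_def)
  next
    case (Some e')
    then have "\<not> incident ends e' v" "D' e = ends e' \<or> D' e = prod.swap (ends e')"
      using that D' by (auto simp: lift_E_def is_orientation_def lift_ends_def)
    then show ?thesis
      by (auto simp: arc_excess_def incident_def)
  qed
  show ?thesis
    using zero by (simp add: net_outdeg_eq_sum[OF fin] sum.neutral)
qed

lemma net_outdeg_unlift_mod_3:
  assumes D': "is_orientation (lift_E E ends v) (lift_ends ends a b) D'"
    and off_v: "\<forall>x\<in>V - {v}. net_outdeg (lift_E E ends v) D' x mod 3 =
      (\<beta> x - (\<Sum>e\<in>other_edges. arc_excess (D e) x)) mod 3"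
    and at_v: "(\<Sum>e\<in>other_edges. arc_excess (D e) v) mod 3 = \<beta> v mod 3"
  shows "\<forall>x\<in>V. net_outdeg E (unlift D' D) x mod 3 = \<beta> x mod 3"
proof
  fix x assume x: "x \<in> V"
  let ?c = "\<Sum>e\<in>other_edges. arc_excess (D e) x"
  show "net_outdeg E (unlift D' D) x mod 3 = \<beta> x mod 3"
  proof (cases "x = v")
    case True
    then show ?thesis
      using at_v net_outdeg_unlift[OF D'] net_outdeg_lift_at_v[OF D'] by simp
  next
    case False
    then have "net_outdeg (lift_E E ends v) D' x mod 3 = (\<beta> x - ?c) mod 3"
      using x off_v by simp
    then have "(net_outdeg (lift_E E ends v) D' x + ?c) mod 3 = (\<beta> x - ?c + ?c) mod 3"
      by (rule mod_add_cong) simp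
    then show ?thesis
      by (simp add: net_outdeg_unlift[OF D'])
  qed
qed

end

theorem mainTheorem9:
  fixes V :: "'v set" and E :: "'e set" and ends :: "'e \<Rightarrow> 'v \<times> 'v"
    and v a b :: 'v and e1 e2 :: 'e
  assumes "multigraph V E ends"
    and "v \<in> V"
    and "degree E ends v \<ge> 4"
    and "e1 \<in> E" and "e2 \<in> E" and "e1 \<noteq> e2"
    and "ends e1 = (v, a) \<or> ends e1 = (a, v)"
    and "ends e2 = (v, b) \<or> ends e2 = (b, v)"
    and "a \<noteq> b"
    and "S3 (lift_V V v) (lift_E E ends v) (lift_ends ends a b)"
  shows "S3 V E ends"
proof -
  interpret vertex_lifting V E ends v a b e1 e2
    using assms by unfold_locales
  show ?thesis
    unfolding S3_def
  proof (intro allI impI)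
    fix \<beta> :: "'v \<Rightarrow> int"
    assume \<beta>: "(\<Sum>x\<in>V. \<beta> x) mod 3 = 0"
    have "card other_edges \<ge> 2"
      using card_other_edges assms(3) by simp
    then obtain D where D: "is_orientation other_edges ends D"
      and D_at_v: "(\<Sum>e\<in>other_edges. arc_excess (D e) v) mod 3 = \<beta> v mod 3"
      using star_orientation_excess_mod_3[OF finite_other_edges _ other_edges_star] by blast
    have \<beta>': "(\<Sum>x\<in>lift_V V v. \<beta> x - (\<Sum>e\<in>other_edges. arc_excess (D e) x)) mod 3 = 0"
      unfolding lift_V_def
      using sum_remove_mod[OF finite_V v_in
          sum_arc_excess_eq_0[OF multigraph other_edges_subset D] \<beta> D_at_v] .
    obtain D' where D': "is_orientation (lift_E E ends v) (lift_ends ends a b) D'"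
      and sc: "strongly_connected (lift_V V v) (lift_E E ends v) D'"
      and net: "\<forall>x\<in>lift_V V v. net_outdeg (lift_E E ends v) D' x mod 3 =
        (\<beta> x - (\<Sum>e\<in>other_edges. arc_excess (D e) x)) mod 3"
      using assms(10)[unfolded S3_def, rule_format, OF \<beta>'] by blast
    show "\<exists>D. is_orientation E ends D \<and> strongly_connected V E D \<and>
        (\<forall>x\<in>V. net_outdeg E D x mod 3 = \<beta> x mod 3)"
      using is_orientation_unlift[OF D' D] strongly_connected_unlift[OF D' sc]
        net_outdeg_unlift_mod_3[OF D' net[unfolded lift_V_def] D_at_v] by blast
  qed
qed

end
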